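(* Let $\mathbbm k\ge2$ be an integer, $\Gamma$ an infinite set, $\varphi\colon\Gamma\to\Gamma$ an injective map without periodic points, and $w=(w_\gamma)_{\gamma\in\Gamma}\in\mathbb Z_{\mathbbm k}^\Gamma$ invertible. Let $\sigma\colon\mathbb Z_{\mathbbm k}^\Gamma\to\mathbb Z_{\mathbbm k}^\Gamma$ be the weighted shift $(\sigma x)_\gamma=w_\gamma x_{\varphi\gamma}$. Then the $\mathbb Z_+$-semiflow generated by $\sigma$ on $\mathbb Z_{\mathbbm k}^\Gamma$ is weakly mixing, and the $\mathbb Z_+$-semiflow generated by $\sigma\times\sigma$ on $\mathbb Z_{\mathbbm k}^\Gamma\times\mathbb Z_{\mathbbm k}^\Gamma$ is Devaney chaotic.
   Context: $\mathbb Z_{\mathbbm k}=\mathbb Z/\mathbbm k\mathbb Z$ with the discrete topology, $\mathbb Z_{\mathbbm k}^\Gamma$ with the product topology. An element $k\in\mathbb Z_{\mathbbm k}$ is invertible if there is $k^{-1}$ with $kk^{-1}=1\pmod{\mathbbm k}$; $w$ is invertible if every $w_\gamma$ is. $\gamma$ is a periodic point of $\varphi$ if $\varphi^\tau\gamma=\gamma$ for some integer $\tau\ge1$. A $\mathbb Z_+$-semiflow $(f,Z)$ is topologically transitive if for all nonempty open $U,V$ there is $n\ge0$ with $f^nU\cap V\ne\emptyset$; it is weakly mixing if $(f\times f,Z\times Z)$ is topologically transitive; it is Devaney chaotic if it is topologically transitive and its periodic points ($f^nz=z$ for some $n\ge1$) are dense. *)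

theory Defs
  imports "HOL-Analysis.Analysis"
begin

text \<open>Z_k = {0,...,k-1} with the discrete topology; Z_k^Gamma with the product topology.
  The index set Gamma is the universe of a type variable 'g.\<close>
definition Zk_power :: "nat \<Rightarrow> ('g \<Rightarrow> nat) topology" where
  "Zk_power k = product_topology (\<lambda>_. discrete_topology {..<k}) UNIV"

definition invertible_mod :: "nat \<Rightarrow> nat \<Rightarrow> bool" where
  "invertible_mod k a \<longleftrightarrow> (\<exists>b\<in>{..<k}. (a * b) mod k = 1 mod k)"

definition wshift :: "nat \<Rightarrow> ('g \<Rightarrow> nat) \<Rightarrow> ('g \<Rightarrow> 'g) \<Rightarrow> ('g \<Rightarrow> nat) \<Rightarrow> ('g \<Rightarrow> nat)" where
  "wshift k w \<phi> x = (\<lambda>\<gamma>. (w \<gamma> * x (\<phi> \<gamma>)) mod k)"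

definition top_transitive :: "'a topology \<Rightarrow> ('a \<Rightarrow> 'a) \<Rightarrow> bool" where
  "top_transitive Z f \<longleftrightarrow>
     (\<forall>U V. openin Z U \<and> U \<noteq> {} \<and> openin Z V \<and> V \<noteq> {} \<longrightarrow>
        (\<exists>n::nat. (f ^^ n) ` U \<inter> V \<noteq> {}))"

definition prod_map :: "('a \<Rightarrow> 'a) \<Rightarrow> 'a \<times> 'a \<Rightarrow> 'a \<times> 'a" where
  "prod_map f = (\<lambda>(x, y). (f x, f y))"

definition weakly_mixing :: "'a topology \<Rightarrow> ('a \<Rightarrow> 'a) \<Rightarrow> bool" where
  "weakly_mixing Z f \<longleftrightarrow> top_transitive (prod_topology Z Z) (prod_map f)"

definition devaney_chaotic :: "'a topology \<Rightarrow> ('a \<Rightarrow> 'a) \<Rightarrow> bool" where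
  "devaney_chaotic Z f \<longleftrightarrow> top_transitive Z f \<and>
     Z closure_of {z \<in> topspace Z. \<exists>n\<ge>1. (f ^^ n) z = z} = topspace Z"

end

theory Submission
  imports Defs "HOL-Number_Theory.Cong"
begin

text \<open>
  The power \<open>\<sigma>\<^sup>n\<close> is again a weighted shift, along the injective map \<open>\<phi>\<^sup>n\<close> and with the weights
  \<open>w \<gamma> * w (\<phi> \<gamma>) * \<dots> * w (\<phi>\<^sup>n\<^sup>-\<^sup>1 \<gamma>)\<close>, which are units mod \<open>k\<close>. Basic open sets are cylinders
  over finite sets \<open>F\<close> of coordinates, and since \<open>\<phi>\<close> is injective without periodic points,
  \<open>\<phi>\<^sup>n F \<inter> F = {}\<close> for all large \<open>n\<close>. For such \<open>n\<close> both \<open>x\<close> and \<open>\<sigma>\<^sup>n x\<close> can be prescribed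
  on \<open>F\<close> at the same time, which gives weak mixing. Moreover \<open>F\<close> is then wandering for \<open>\<phi>\<^sup>n\<close>, so a
  fixed point of \<open>\<sigma>\<^sup>n\<close> with prescribed values on \<open>F\<close> is obtained by propagating these values
  along the \<open>\<phi>\<^sup>n\<close>-chains through \<open>F\<close>; using the same period in both coordinates gives dense
  periodic points of \<open>\<sigma> \<times> \<sigma>\<close>.
\<close>

lemma topspace_Zk_power: "topspace (Zk_power k) = {x. \<forall>i. x i < k}"
  by (auto simp: Zk_power_def PiE_iff)

lemma Zk_power_cylinder_subset:
  assumes "openin (Zk_power k) U" "z \<in> U"
  obtains F where "finite F" "\<And>y. y \<in> topspace (Zk_power k) \<Longrightarrow> \<forall>i\<in>F. y i = z i \<Longrightarrow> y \<in> U"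
proof -
  from assms obtain V where V: "finite {i. V i \<noteq> {..<k}}" "z \<in> Pi\<^sub>E UNIV V" "Pi\<^sub>E UNIV V \<subseteq> U"
    unfolding Zk_power_def openin_product_topology_alt by auto
  have "y \<in> U" if "y \<in> topspace (Zk_power k)" "\<forall>i\<in>{i. V i \<noteq> {..<k}}. y i = z i" for y
  proof -
    have "y i \<in> V i" for i
      using that V(2) by (cases "V i = {..<k}") (auto simp: PiE_iff topspace_Zk_power)
    then show ?thesis using V(3) by blast
  qed
  with V(1) show thesis by (rule that)
qed

lemma prod_Zk_power_cylinder_subset:
  assumes "openin (prod_topology (Zk_power k) (Zk_power k)) W" "(a, b) \<in> W"
  obtains F where "finite F"
    "\<And>x y. x \<in> topspace (Zk_power k) \<Longrightarrow> y \<in> topspace (Zk_power k) \<Longrightarrow>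
       \<forall>i\<in>F. x i = a i \<Longrightarrow> \<forall>i\<in>F. y i = b i \<Longrightarrow> (x, y) \<in> W"
proof -
  have "\<exists>U V. openin (Zk_power k) U \<and> openin (Zk_power k) V \<and> a \<in> U \<and> b \<in> V \<and> U \<times> V \<subseteq> W"
    using assms(1)[unfolded openin_prod_topology_alt, rule_format, OF assms(2)] .
  then obtain U V where UV: "openin (Zk_power k) U" "openin (Zk_power k) V" "a \<in> U" "b \<in> V" "U \<times> V \<subseteq> W"
    by (elim exE conjE)
  obtain F1 where F1: "finite F1" "\<And>x. x \<in> topspace (Zk_power k) \<Longrightarrow> \<forall>i\<in>F1. x i = a i \<Longrightarrow> x \<in> U"
    by (rule Zk_power_cylinder_subset[OF UV(1,3)]) (rule that)
  obtain F2 where F2: "finite F2" "\<And>y. y \<in> topspace (Zk_power k) \<Longrightarrow> \<forall>i\<in>F2. y i = b i \<Longrightarrow> y \<in> V"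
    by (rule Zk_power_cylinder_subset[OF UV(2,4)]) (rule that)
  show thesis
  proof (rule that[of "F1 \<union> F2"])
    show "finite (F1 \<union> F2)" using F1(1) F2(1) by simp
    fix x y
    assume "x \<in> topspace (Zk_power k)" "y \<in> topspace (Zk_power k)"
      and "\<forall>i\<in>F1 \<union> F2. x i = a i" "\<forall>i\<in>F1 \<union> F2. y i = b i"
    then have "x \<in> U" "y \<in> V" by (simp_all add: F1(2) F2(2))
    then show "(x, y) \<in> W" using UV(5) by blast
  qed
qed

lemma prod_map_funpow: "(prod_map f ^^ n) (x, y) = ((f ^^ n) x, (f ^^ n) y)"
  by (induction n) (simp_all add: prod_map_def)

definition inverse_mod :: "nat \<Rightarrow> nat \<Rightarrow> nat" where
  "inverse_mod k a = (SOME b. [a * b = 1] (mod k))"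

lemma cong_mult_inverse_mod: "coprime a k \<Longrightarrow> [a * inverse_mod k a = 1] (mod k)"
  unfolding inverse_mod_def using cong_solve_coprime_nat by (auto intro: someI_ex)

lemma mult_inverse_mod_mod:
  assumes "coprime a k"
  shows "a * (inverse_mod k a * c mod k) mod k = c mod k"
proof -
  have "[a * (inverse_mod k a * c) = 1 * c] (mod k)"
    unfolding mult.assoc[symmetric] using cong_mult_inverse_mod[OF assms] by (rule cong_scalar_right)
  then show ?thesis by (simp add: cong_def mod_mult_right_eq)
qed

lemma mult_inverse_mod_mult_mod:
  assumes "coprime u k" "coprime v k"
  shows "v * (inverse_mod k (u * v) * c mod k) mod k = inverse_mod k u * c mod k"
proof -
  have "[v * inverse_mod k (u * v) * c = v * inverse_mod k (u * v) * c * (u * inverse_mod k u)] (mod k)"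
    using cong_mult_inverse_mod[OF assms(1)] by (metis cong_scalar_left cong_sym mult.right_neutral)
  also have "v * inverse_mod k (u * v) * c * (u * inverse_mod k u)
      = (u * v * inverse_mod k (u * v)) * (inverse_mod k u * c)"
    by (simp add: ac_simps)
  also have "[\<dots> = 1 * (inverse_mod k u * c)] (mod k)"
    using cong_mult_inverse_mod assms by (intro cong_scalar_right) simp
  finally show ?thesis by (simp add: cong_def mod_mult_right_eq mult.assoc)
qed

lemma invertible_mod_imp_coprime: "invertible_mod k a \<Longrightarrow> coprime a k"
  unfolding invertible_mod_def
  by (metis cong_def cong_imp_coprime coprime_1_left coprime_mult_left_iff)

definition cocycle :: "('g \<Rightarrow> nat) \<Rightarrow> ('g \<Rightarrow> 'g) \<Rightarrow> nat \<Rightarrow> 'g \<Rightarrow> nat" where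
  "cocycle v \<psi> n \<gamma> = (\<Prod>j<n. v ((\<psi> ^^ j) \<gamma>))"

lemma cocycle_0 [simp]: "cocycle v \<psi> 0 \<gamma> = 1"
  by (simp add: cocycle_def)

lemma cocycle_Suc: "cocycle v \<psi> (Suc n) \<gamma> = v \<gamma> * cocycle v \<psi> n (\<psi> \<gamma>)"
  by (simp only: cocycle_def prod.lessThan_Suc_shift) (simp add: funpow_Suc_right del: funpow.simps)

lemma cocycle_Suc_right: "cocycle v \<psi> (Suc n) \<gamma> = cocycle v \<psi> n \<gamma> * v ((\<psi> ^^ n) \<gamma>)"
  by (simp add: cocycle_def)

lemma coprime_cocycle: "(\<And>\<gamma>. coprime (v \<gamma>) k) \<Longrightarrow> coprime (cocycle v \<psi> n \<gamma>) k"
  by (simp add: cocycle_def prod_coprime_left)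

lemma wshift_in_topspace: "0 < k \<Longrightarrow> wshift k v \<psi> x \<in> topspace (Zk_power k)"
  by (simp add: wshift_def topspace_Zk_power)

text \<open>Stated for \<open>Suc n\<close>: for \<open>n = 0\<close> the right-hand side would still reduce \<open>x\<close> mod \<open>k\<close>.\<close>

lemma funpow_wshift: "wshift k w \<phi> ^^ Suc n = wshift k (cocycle w \<phi> (Suc n)) (\<phi> ^^ Suc n)"
proof (induction n)
  case (Suc n)
  show ?case
  proof
    fix x
    have "(wshift k w \<phi> ^^ Suc (Suc n)) x = wshift k w \<phi> ((wshift k w \<phi> ^^ Suc n) x)"
      by simp
    also have "\<dots> = wshift k (cocycle w \<phi> (Suc (Suc n))) (\<phi> ^^ Suc (Suc n)) x"
      unfolding Suc wshift_def cocycle_Suc[of w \<phi> "Suc n"]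
      by (simp add: mod_mult_right_eq mult.assoc funpow_Suc_right del: funpow.simps)
    finally show "(wshift k w \<phi> ^^ Suc (Suc n)) x = \<dots>" .
  qed
qed (simp add: wshift_def cocycle_def fun_eq_iff)

lemma wshift_prescribed_on_preimage:
  fixes k :: nat
  assumes "0 < k" "inj \<psi>" "\<And>\<gamma>. coprime (v \<gamma>) k" "\<psi> ` G \<inter> F = {}"
  obtains x where "\<forall>i. x i < k" "\<forall>i\<in>F. x i = a i mod k" "\<forall>i\<in>G. wshift k v \<psi> x i = c i mod k"
proof -
  let ?x = "\<lambda>\<gamma>. if \<gamma> \<in> \<psi> ` G then inverse_mod k (v (inv \<psi> \<gamma>)) * c (inv \<psi> \<gamma>) mod k else a \<gamma> mod k"
  have "\<forall>i. ?x i < k" using assms(1) by simp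
  moreover have "\<forall>i\<in>F. ?x i = a i mod k" using assms(4) by auto
  moreover have "\<forall>i\<in>G. wshift k v \<psi> ?x i = c i mod k"
    using assms(2,3) by (simp add: wshift_def mult_inverse_mod_mod)
  ultimately show thesis by (rule that)
qed

lemma inj_funpow_orbit:
  assumes "inj \<phi>" "\<And>\<tau>. \<tau> \<ge> 1 \<Longrightarrow> (\<phi> ^^ \<tau>) \<gamma> \<noteq> \<gamma>"
  shows "inj (\<lambda>n. (\<phi> ^^ n) \<gamma>)"
proof (rule linorder_injI)
  fix a b :: nat assume "a < b"
  then have "(\<phi> ^^ b) \<gamma> = (\<phi> ^^ a) ((\<phi> ^^ (b - a)) \<gamma>)"
    by (metis funpow_add comp_apply le_add_diff_inverse less_imp_le)
  moreover have "(\<phi> ^^ (b - a)) \<gamma> \<noteq> \<gamma>"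
    using assms(2) \<open>a < b\<close> by simp
  ultimately show "(\<phi> ^^ a) \<gamma> \<noteq> (\<phi> ^^ b) \<gamma>"
    using inj_fn[OF assms(1)] by (metis injD)
qed

lemma eventually_funpow_image_disjoint:
  assumes "inj \<phi>" "\<And>\<gamma> \<tau>. \<tau> \<ge> 1 \<Longrightarrow> (\<phi> ^^ \<tau>) \<gamma> \<noteq> \<gamma>" "finite F" "finite G"
  shows "\<forall>\<^sub>F n in sequentially. (\<phi> ^^ n) ` G \<inter> F = {}"
proof -
  have "{n. (\<phi> ^^ n) ` G \<inter> F \<noteq> {}} \<subseteq> (\<Union>\<gamma>\<in>G. \<Union>\<delta>\<in>F. (\<lambda>n. (\<phi> ^^ n) \<gamma>) -` {\<delta>})"
    by blast
  moreover have "finite (\<Union>\<gamma>\<in>G. \<Union>\<delta>\<in>F. (\<lambda>n. (\<phi> ^^ n) \<gamma>) -` {\<delta>})"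
    using assms by (auto intro!: finite_vimageI inj_funpow_orbit)
  ultimately show ?thesis
    unfolding cofinite_eq_sequentially[symmetric] eventually_cofinite by (simp add: finite_subset)
qed

definition wandering :: "('g \<Rightarrow> 'g) \<Rightarrow> 'g set \<Rightarrow> bool" where
  "wandering \<psi> F \<longleftrightarrow> (\<forall>j\<ge>1. (\<psi> ^^ j) ` F \<inter> F = {})"

lemma wanderingD: "wandering \<psi> F \<Longrightarrow> \<delta> \<in> F \<Longrightarrow> (\<psi> ^^ j) \<delta> \<in> F \<Longrightarrow> j = 0"
  unfolding wandering_def by (metis disjoint_iff image_eqI less_one not_le)

lemma wandering_funpow:
  assumes "\<And>m. m \<ge> n \<Longrightarrow> (\<phi> ^^ m) ` F \<inter> F = {}" "n \<ge> 1"
  shows "wandering (\<phi> ^^ n) F"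
  unfolding wandering_def funpow_mult
proof (intro allI impI)
  fix j :: nat assume "j \<ge> 1"
  then have "n * j \<ge> n" by simp
  then show "(\<phi> ^^ (n * j)) ` F \<inter> F = {}" by (rule assms(1))
qed

lemma wandering_backward_unique:
  assumes "wandering \<psi> F" "(\<psi> ^^ i) \<gamma> \<in> F" "(\<psi> ^^ j) \<gamma> \<in> F"
  shows "i = j"
proof -
  have "i = j" if "i \<le> j" "(\<psi> ^^ i) \<gamma> \<in> F" "(\<psi> ^^ j) \<gamma> \<in> F" for i j
  proof -
    have "(\<psi> ^^ (j - i)) ((\<psi> ^^ i) \<gamma>) = (\<psi> ^^ j) \<gamma>"
      using \<open>i \<le> j\<close> by (metis funpow_add comp_apply le_add_diff_inverse2)
    then have "j - i = 0" using wanderingD[OF assms(1) that(2), of "j - i"] that(3) by simp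
    then show ?thesis using \<open>i \<le> j\<close> by simp
  qed
  then show ?thesis using assms(2,3) by (metis nat_le_linear)
qed

lemma wandering_forward_unique:
  assumes "inj \<psi>" "wandering \<psi> F" "\<delta> \<in> F" "\<delta>' \<in> F" "(\<psi> ^^ i) \<delta> = (\<psi> ^^ j) \<delta>'"
  shows "i = j \<and> \<delta> = \<delta>'"
proof -
  have "i = j \<and> \<delta> = \<delta>'" if "i \<le> j" "\<delta> \<in> F" "\<delta>' \<in> F" "(\<psi> ^^ i) \<delta> = (\<psi> ^^ j) \<delta>'" for i j \<delta> \<delta>'
  proof -
    have "(\<psi> ^^ i) \<delta> = (\<psi> ^^ i) ((\<psi> ^^ (j - i)) \<delta>')"
      using that(1,4) by (metis funpow_add comp_apply le_add_diff_inverse)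
    then have "\<delta> = (\<psi> ^^ (j - i)) \<delta>'"
      using inj_fn[OF assms(1)] by (metis injD)
    then have "j - i = 0" using wanderingD[OF assms(2) that(3), of "j - i"] that(2) by simp
    then show ?thesis using that(1) \<open>\<delta> = _\<close> by simp
  qed
  then show ?thesis using assms(3-5) by (metis nat_le_linear)
qed

definition chains_through :: "('g \<Rightarrow> 'g) \<Rightarrow> 'g set \<Rightarrow> 'g set" where
  "chains_through \<psi> F = {\<gamma>. \<exists>\<delta>\<in>F. \<exists>j. (\<psi> ^^ j) \<gamma> = \<delta> \<or> (\<psi> ^^ j) \<delta> = \<gamma>}"

lemma chains_through_preimage:
  assumes "inj \<psi>" "\<psi> \<gamma> \<in> chains_through \<psi> F"
  shows "\<gamma> \<in> chains_through \<psi> F"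
proof -
  obtain \<delta> j where \<delta>: "\<delta> \<in> F" "(\<psi> ^^ j) (\<psi> \<gamma>) = \<delta> \<or> (\<psi> ^^ j) \<delta> = \<psi> \<gamma>"
    using assms(2) unfolding chains_through_def by blast
  have "(\<psi> ^^ Suc j) \<gamma> = \<delta> \<or> (\<psi> ^^ j) \<delta> = \<psi> \<gamma>"
    using \<delta>(2) by (simp add: funpow_Suc_right del: funpow.simps)
  then show ?thesis
  proof
    assume "(\<psi> ^^ Suc j) \<gamma> = \<delta>"
    then show ?thesis using \<delta>(1) unfolding chains_through_def by blast
  next
    assume fwd: "(\<psi> ^^ j) \<delta> = \<psi> \<gamma>"
    show ?thesis
    proof (cases j)
      case 0
      then have "(\<psi> ^^ 1) \<gamma> = \<delta>" using fwd by simp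
      then show ?thesis using \<delta>(1) unfolding chains_through_def by blast
    next
      case (Suc i)
      then have "\<psi> ((\<psi> ^^ i) \<delta>) = \<psi> \<gamma>" using fwd by simp
      then have "(\<psi> ^^ i) \<delta> = \<gamma>" using injD[OF assms(1)] by blast
      then show ?thesis using \<delta>(1) unfolding chains_through_def by blast
    qed
  qed
qed

text \<open>On the \<open>\<psi>\<close>-chains through a wandering set \<open>F\<close> each point determines its anchor in \<open>F\<close>
  and its distance to it, so values can be prescribed there independently.\<close>

definition chain_extension ::
    "('g \<Rightarrow> 'g) \<Rightarrow> 'g set \<Rightarrow> (nat \<Rightarrow> 'g \<Rightarrow> 'b) \<Rightarrow> (nat \<Rightarrow> 'g \<Rightarrow> 'b) \<Rightarrow> 'b \<Rightarrow> 'g \<Rightarrow> 'b" where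
  "chain_extension \<psi> F p q z \<gamma> =
    (if \<exists>j. (\<psi> ^^ j) \<gamma> \<in> F then p (SOME j. (\<psi> ^^ j) \<gamma> \<in> F) \<gamma>
     else if \<gamma> \<in> chains_through \<psi> F then (SOME r. \<exists>\<delta>\<in>F. \<exists>j. (\<psi> ^^ j) \<delta> = \<gamma> \<and> r = q j \<delta>)
     else z)"

lemma chain_extension_backward:
  assumes "wandering \<psi> F" "(\<psi> ^^ j) \<gamma> \<in> F"
  shows "chain_extension \<psi> F p q z \<gamma> = p j \<gamma>"
proof -
  have "(SOME j. (\<psi> ^^ j) \<gamma> \<in> F) = j"
  proof (rule some_equality)
    fix i assume "(\<psi> ^^ i) \<gamma> \<in> F"
    then show "i = j" by (rule wandering_backward_unique[OF assms(1) _ assms(2)])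
  qed (fact assms(2))
  then show ?thesis using assms(2) by (auto simp: chain_extension_def)
qed

lemma chain_extension_forward:
  assumes "inj \<psi>" "wandering \<psi> F" "\<delta> \<in> F" "j \<ge> 1"
  shows "chain_extension \<psi> F p q z ((\<psi> ^^ j) \<delta>) = q j \<delta>"
proof -
  have "(\<psi> ^^ i) ((\<psi> ^^ j) \<delta>) \<notin> F" for i
    using wanderingD[OF assms(2,3), of "i + j"] assms(4) by (auto simp: funpow_add)
  moreover have "(\<psi> ^^ j) \<delta> \<in> chains_through \<psi> F"
    using assms(3) unfolding chains_through_def by blast
  moreover have "(SOME r. \<exists>\<delta>'\<in>F. \<exists>j'. (\<psi> ^^ j') \<delta>' = (\<psi> ^^ j) \<delta> \<and> r = q j' \<delta>') = q j \<delta>"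
  proof (rule some_equality)
    fix r assume "\<exists>\<delta>'\<in>F. \<exists>j'. (\<psi> ^^ j') \<delta>' = (\<psi> ^^ j) \<delta> \<and> r = q j' \<delta>'"
    then obtain \<delta>' j' where \<delta>': "\<delta>' \<in> F" "(\<psi> ^^ j') \<delta>' = (\<psi> ^^ j) \<delta>" "r = q j' \<delta>'"
      by blast
    have "j' = j \<and> \<delta>' = \<delta>"
      using wandering_forward_unique[OF assms(1,2) \<delta>'(1) assms(3) \<delta>'(2)] .
    then show "r = q j \<delta>" using \<delta>'(3) by simp
  qed (use assms(3) in blast)
  ultimately show ?thesis by (simp add: chain_extension_def)
qed

lemma chain_extension_outside: "\<gamma> \<notin> chains_through \<psi> F \<Longrightarrow> chain_extension \<psi> F p q z \<gamma> = z"
  unfolding chain_extension_def chains_through_def by auto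

lemma chains_through_cases:
  assumes "\<And>j. (\<psi> ^^ j) \<gamma> \<in> F \<Longrightarrow> thesis"
    "\<And>\<delta> j. \<delta> \<in> F \<Longrightarrow> j \<ge> 1 \<Longrightarrow> \<gamma> = (\<psi> ^^ j) \<delta> \<Longrightarrow> thesis"
    "\<gamma> \<notin> chains_through \<psi> F \<Longrightarrow> thesis"
  shows thesis
proof (cases "\<gamma> \<in> chains_through \<psi> F")
  case True
  then obtain \<delta> j where \<delta>: "\<delta> \<in> F" "(\<psi> ^^ j) \<gamma> = \<delta> \<or> (\<psi> ^^ j) \<delta> = \<gamma>"
    unfolding chains_through_def by blast
  show thesis
  proof (cases "(\<psi> ^^ j) \<gamma> = \<delta>")
    case True
    then show thesis using assms(1) \<delta>(1) by blast
  next
    case False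
    with \<delta>(2) have "(\<psi> ^^ j) \<delta> = \<gamma>" by blast
    moreover from this False have "j \<noteq> 0" by (cases j) auto
    ultimately show thesis by (intro assms(2)[OF \<delta>(1), of j]) auto
  qed
qed (rule assms(3))

text \<open>A fixed point satisfies \<open>x \<gamma> = v \<gamma> * x (\<psi> \<gamma>)\<close>, so along the chain through \<open>\<delta> \<in> F\<close> it is
  forced by \<open>x \<delta>\<close>: multiply by the cocycle going backwards, by its inverse going forwards.\<close>

lemma wshift_fixed_point_extending:
  fixes k :: nat
  assumes "0 < k" "inj \<psi>" "\<And>\<gamma>. coprime (v \<gamma>) k" "wandering \<psi> F"
  obtains x where "\<forall>i. x i < k" "\<forall>\<delta>\<in>F. x \<delta> = a \<delta> mod k" "wshift k v \<psi> x = x"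
proof -
  define x where "x = chain_extension \<psi> F (\<lambda>j \<gamma>. cocycle v \<psi> j \<gamma> * a ((\<psi> ^^ j) \<gamma>) mod k)
    (\<lambda>j \<delta>. inverse_mod k (cocycle v \<psi> j \<delta>) * a \<delta> mod k) 0"
  have backward: "x \<gamma> = cocycle v \<psi> j \<gamma> * a ((\<psi> ^^ j) \<gamma>) mod k" if "(\<psi> ^^ j) \<gamma> \<in> F" for \<gamma> j
    using chain_extension_backward[OF assms(4) that] by (simp add: x_def)
  have forward: "x ((\<psi> ^^ j) \<delta>) = inverse_mod k (cocycle v \<psi> j \<delta>) * a \<delta> mod k"
    if "\<delta> \<in> F" "j \<ge> 1" for \<delta> j
    using chain_extension_forward[OF assms(2,4) that] by (simp add: x_def)
  have off: "x \<gamma> = 0" if "\<gamma> \<notin> chains_through \<psi> F" for \<gamma>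
    using chain_extension_outside[OF that] by (simp add: x_def)
  have bounded: "x \<gamma> < k" for \<gamma>
    by (rule chains_through_cases[of \<psi> \<gamma> F]) (simp_all add: backward forward off assms(1))
  have fixed: "wshift k v \<psi> x \<gamma> = x \<gamma>" for \<gamma>
  proof (rule chains_through_cases[of \<psi> \<gamma> F])
    fix j assume j: "(\<psi> ^^ j) \<gamma> \<in> F"
    show "wshift k v \<psi> x \<gamma> = x \<gamma>"
    proof (cases j)
      case 0
      then have "x (\<psi> \<gamma>) = inverse_mod k (v \<gamma>) * a \<gamma> mod k"
        using forward[of \<gamma> 1] j by (simp add: cocycle_Suc)
      then show ?thesis using backward[OF j] 0 assms(3) by (simp add: wshift_def mult_inverse_mod_mod)
    next
      case (Suc i)
      then have "x (\<psi> \<gamma>) = cocycle v \<psi> i (\<psi> \<gamma>) * a ((\<psi> ^^ j) \<gamma>) mod k"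
        using backward[of i "\<psi> \<gamma>"] j by (simp add: funpow_swap1)
      then show ?thesis
        using backward[OF j] Suc by (simp add: wshift_def cocycle_Suc mod_mult_right_eq mult.assoc)
    qed
  next
    fix \<delta> j assume \<delta>: "\<delta> \<in> F" "j \<ge> 1" "\<gamma> = (\<psi> ^^ j) \<delta>"
    then have "x (\<psi> \<gamma>) = inverse_mod k (cocycle v \<psi> j \<delta> * v \<gamma>) * a \<delta> mod k"
      using forward[of \<delta> "Suc j"] by (simp add: cocycle_Suc_right)
    moreover have "coprime (cocycle v \<psi> j \<delta>) k"
      using assms(3) by (rule coprime_cocycle)
    ultimately show "wshift k v \<psi> x \<gamma> = x \<gamma>"
      using forward[OF \<delta>(1,2)] \<delta>(3) assms(3) by (simp add: wshift_def mult_inverse_mod_mult_mod)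
  next
    assume "\<gamma> \<notin> chains_through \<psi> F"
    moreover from this have "\<psi> \<gamma> \<notin> chains_through \<psi> F"
      using chains_through_preimage[OF assms(2)] by blast
    ultimately show "wshift k v \<psi> x \<gamma> = x \<gamma>"
      using off by (simp add: wshift_def)
  qed
  show thesis
    by (rule that) (use bounded backward[where j = 0] fixed in \<open>auto intro!: ext\<close>)
qed

locale aperiodic_weighted_shift =
  fixes k :: nat and w :: "'g \<Rightarrow> nat" and \<phi> :: "'g \<Rightarrow> 'g"
  assumes k_pos: "0 < k" and inj_\<phi>: "inj \<phi>"
    and aperiodic: "\<And>\<gamma> \<tau>. \<tau> \<ge> 1 \<Longrightarrow> (\<phi> ^^ \<tau>) \<gamma> \<noteq> \<gamma>"
    and coprime_w: "\<And>\<gamma>. coprime (w \<gamma>) k"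
begin

lemma funpow_wshift_in_topspace: "x \<in> topspace (Zk_power k) \<Longrightarrow> (wshift k w \<phi> ^^ n) x \<in> topspace (Zk_power k)"
  by (induction n) (simp_all add: wshift_in_topspace k_pos)

lemma funpow_wshift_prescribed_on_cylinder:
  assumes "finite F"
  obtains n where "\<And>a c. a \<in> topspace (Zk_power k) \<Longrightarrow> c \<in> topspace (Zk_power k) \<Longrightarrow>
    \<exists>x\<in>topspace (Zk_power k). (\<forall>i\<in>F. x i = a i) \<and> (\<forall>i\<in>F. (wshift k w \<phi> ^^ n) x i = c i)"
proof -
  obtain N where N: "(\<phi> ^^ Suc N) ` F \<inter> F = {}"
    using eventually_funpow_image_disjoint[OF inj_\<phi> aperiodic assms assms]
    unfolding eventually_sequentially by (meson le_SucI order_refl)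
  have "\<exists>x\<in>topspace (Zk_power k). (\<forall>i\<in>F. x i = a i) \<and> (\<forall>i\<in>F. (wshift k w \<phi> ^^ Suc N) x i = c i)"
    if "a \<in> topspace (Zk_power k)" "c \<in> topspace (Zk_power k)" for a c
  proof -
    obtain x where "\<forall>i. x i < k" "\<forall>i\<in>F. x i = a i mod k"
        "\<forall>i\<in>F. wshift k (cocycle w \<phi> (Suc N)) (\<phi> ^^ Suc N) x i = c i mod k"
      using wshift_prescribed_on_preimage[OF k_pos inj_fn[OF inj_\<phi>] coprime_cocycle[OF coprime_w] N] .
    then show ?thesis using that unfolding funpow_wshift by (auto simp: topspace_Zk_power)
  qed
  then show thesis by (rule that)
qed

lemma periodic_point_on_cylinder:
  assumes "finite F"
  obtains n where "n \<ge> 1" "\<And>a. a \<in> topspace (Zk_power k) \<Longrightarrow>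
    \<exists>x\<in>topspace (Zk_power k). (\<forall>i\<in>F. x i = a i) \<and> (wshift k w \<phi> ^^ n) x = x"
proof -
  obtain N where N: "\<And>m. m \<ge> N \<Longrightarrow> (\<phi> ^^ m) ` F \<inter> F = {}"
    using eventually_funpow_image_disjoint[OF inj_\<phi> aperiodic assms assms]
    unfolding eventually_sequentially by blast
  have "wandering (\<phi> ^^ Suc N) F"
    using N by (intro wandering_funpow) auto
  have "\<exists>x\<in>topspace (Zk_power k). (\<forall>i\<in>F. x i = a i) \<and> (wshift k w \<phi> ^^ Suc N) x = x"
    if "a \<in> topspace (Zk_power k)" for a
  proof -
    obtain x where "\<forall>i. x i < k" "\<forall>i\<in>F. x i = a i mod k"
        "wshift k (cocycle w \<phi> (Suc N)) (\<phi> ^^ Suc N) x = x"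
      using wshift_fixed_point_extending[OF k_pos inj_fn[OF inj_\<phi>] coprime_cocycle[OF coprime_w]
          \<open>wandering (\<phi> ^^ Suc N) F\<close>] .
    then show ?thesis using that unfolding funpow_wshift by (auto simp: topspace_Zk_power)
  qed
  then show thesis by (intro that[of "Suc N"]) auto
qed

lemma weakly_mixing_wshift: "weakly_mixing (Zk_power k) (wshift k w \<phi>)"
  unfolding weakly_mixing_def top_transitive_def
proof (intro allI impI, elim conjE)
  let ?Z = "Zk_power k"
  fix U V :: "(('g \<Rightarrow> nat) \<times> ('g \<Rightarrow> nat)) set"
  assume U: "openin (prod_topology ?Z ?Z) U" "U \<noteq> {}" and V: "openin (prod_topology ?Z ?Z) V" "V \<noteq> {}"
  obtain a b where ab: "(a, b) \<in> U" using U(2) by auto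
  obtain c d where cd: "(c, d) \<in> V" using V(2) by auto
  have "a \<in> topspace ?Z" "b \<in> topspace ?Z" "c \<in> topspace ?Z" "d \<in> topspace ?Z"
    using ab cd openin_subset[OF U(1)] openin_subset[OF V(1)] by auto
  obtain FU where "finite FU" and FU: "\<And>x y. x \<in> topspace ?Z \<Longrightarrow> y \<in> topspace ?Z \<Longrightarrow>
      \<forall>i\<in>FU. x i = a i \<Longrightarrow> \<forall>i\<in>FU. y i = b i \<Longrightarrow> (x, y) \<in> U"
    by (rule prod_Zk_power_cylinder_subset[OF U(1) ab]) (rule that)
  obtain FV where "finite FV" and FV: "\<And>x y. x \<in> topspace ?Z \<Longrightarrow> y \<in> topspace ?Z \<Longrightarrow>
      \<forall>i\<in>FV. x i = c i \<Longrightarrow> \<forall>i\<in>FV. y i = d i \<Longrightarrow> (x, y) \<in> V"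
    by (rule prod_Zk_power_cylinder_subset[OF V(1) cd]) (rule that)
  have "finite (FU \<union> FV)" using \<open>finite FU\<close> \<open>finite FV\<close> by simp
  then obtain n where n: "\<And>a c. a \<in> topspace ?Z \<Longrightarrow> c \<in> topspace ?Z \<Longrightarrow>
      \<exists>x\<in>topspace ?Z. (\<forall>i\<in>FU \<union> FV. x i = a i) \<and> (\<forall>i\<in>FU \<union> FV. (wshift k w \<phi> ^^ n) x i = c i)"
    by (rule funpow_wshift_prescribed_on_cylinder) (rule that)
  obtain x where x: "x \<in> topspace ?Z" "\<forall>i\<in>FU. x i = a i" "\<forall>i\<in>FV. (wshift k w \<phi> ^^ n) x i = c i"
    using n[of a c] \<open>a \<in> _\<close> \<open>c \<in> _\<close> by blast
  obtain y where y: "y \<in> topspace ?Z" "\<forall>i\<in>FU. y i = b i" "\<forall>i\<in>FV. (wshift k w \<phi> ^^ n) y i = d i"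
    using n[of b d] \<open>b \<in> _\<close> \<open>d \<in> _\<close> by blast
  have "(x, y) \<in> U"
    using FU[OF x(1) y(1) x(2) y(2)] .
  moreover have "(prod_map (wshift k w \<phi>) ^^ n) (x, y) \<in> V"
    unfolding prod_map_funpow
    using FV[OF funpow_wshift_in_topspace[OF x(1)] funpow_wshift_in_topspace[OF y(1)] x(3) y(3)] .
  ultimately show "\<exists>n. (prod_map (wshift k w \<phi>) ^^ n) ` U \<inter> V \<noteq> {}" by blast
qed

lemma dense_periodic_points_prod:
  "prod_topology (Zk_power k) (Zk_power k) closure_of
     {z \<in> topspace (prod_topology (Zk_power k) (Zk_power k)). \<exists>n\<ge>1. (prod_map (wshift k w \<phi>) ^^ n) z = z}
   = topspace (prod_topology (Zk_power k) (Zk_power k))"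
  (is "?X closure_of ?P = _")
proof (rule subset_antisym[OF closure_of_subset_topspace], safe)
  let ?Z = "Zk_power k"
  fix a b assume "(a, b) \<in> topspace ?X"
  then have a: "a \<in> topspace ?Z" and b: "b \<in> topspace ?Z" by auto
  show "(a, b) \<in> ?X closure_of ?P"
    unfolding in_closure_of
  proof (intro conjI allI impI, fact, elim conjE)
    fix T assume "(a, b) \<in> T" "openin ?X T"
    obtain F where "finite F"
      and F: "\<And>x y. x \<in> topspace ?Z \<Longrightarrow> y \<in> topspace ?Z \<Longrightarrow> \<forall>i\<in>F. x i = a i \<Longrightarrow> \<forall>i\<in>F. y i = b i \<Longrightarrow> (x, y) \<in> T"
      by (rule prod_Zk_power_cylinder_subset[OF \<open>openin ?X T\<close> \<open>(a, b) \<in> T\<close>]) (rule that)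
    obtain n where "n \<ge> 1" and n: "\<And>a. a \<in> topspace ?Z \<Longrightarrow>
        \<exists>x\<in>topspace ?Z. (\<forall>i\<in>F. x i = a i) \<and> (wshift k w \<phi> ^^ n) x = x"
      by (rule periodic_point_on_cylinder[OF \<open>finite F\<close>]) (rule that)
    obtain x where x: "x \<in> topspace ?Z" "\<forall>i\<in>F. x i = a i" "(wshift k w \<phi> ^^ n) x = x"
      using n[OF a] by blast
    obtain y where y: "y \<in> topspace ?Z" "\<forall>i\<in>F. y i = b i" "(wshift k w \<phi> ^^ n) y = y"
      using n[OF b] by blast
    have "(prod_map (wshift k w \<phi>) ^^ n) (x, y) = (x, y)"
      using x(3) y(3) by (simp add: prod_map_funpow)
    then have "(x, y) \<in> ?P"
      using x(1) y(1) \<open>n \<ge> 1\<close> by auto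
    moreover have "(x, y) \<in> T"
      using F[OF x(1) y(1) x(2) y(2)] .
    ultimately show "\<exists>z. z \<in> ?P \<and> z \<in> T" by blast
  qed
qed

end

theorem theorem6:
  fixes k :: nat and \<phi> :: "'g \<Rightarrow> 'g" and w :: "'g \<Rightarrow> nat"
  assumes "k \<ge> 2"
    and "infinite (UNIV :: 'g set)"
    and "inj \<phi>"
    and "\<forall>\<gamma> \<tau>. \<tau> \<ge> 1 \<longrightarrow> (\<phi> ^^ \<tau>) \<gamma> \<noteq> \<gamma>"
    and "\<forall>\<gamma>. w \<gamma> < k \<and> invertible_mod k (w \<gamma>)"
  shows "weakly_mixing (Zk_power k) (wshift k w \<phi>)
       \<and> devaney_chaotic (prod_topology (Zk_power k) (Zk_power k)) (prod_map (wshift k w \<phi>))"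
proof -
  interpret aperiodic_weighted_shift k w \<phi>
    using assms by unfold_locales (auto intro: invertible_mod_imp_coprime)
  show ?thesis
    using weakly_mixing_wshift dense_periodic_points_prod
    unfolding devaney_chaotic_def weakly_mixing_def by blast
qed

end
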